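(* Let $\mathcal{G}$ be an additive arithmetical semigroup satisfying Axiom $A^{\#}$ (constants $c_{\mathcal{G}}>0$, $q>1$, $0\le\eta<1$) with norm $\|g\|=q^{\partial(g)}$. For integers $n,m\ge0$ let $$R(n,m)=\sum_{\substack{0\le\partial(g)\le n\\ d_-(g)>m}}\frac{\mu(g)}{\|g\|}.$$ Then $R(n,m)=O(1)$ uniformly for all $n,m\ge0$.
   Context: An additive arithmetical semigroup is a commutative monoid $\mathcal{G}$ (written additively, identity $e_{\mathcal{G}}$) freely generated by a countable set $\mathcal{P}$ of primes, with an additive degree map $\partial\colon\mathcal{G}\to\mathbb{Z}_{\ge0}$, $\partial(e_{\mathcal{G}})=0$, $\partial(P)>0$ for primes, finitely many elements of each degree. Axiom $A^{\#}$: $\#\{g:\partial(g)=n\}=c_{\mathcal{G}}q^n+O(q^{\eta n})$. $P\mid g$ means $g=P+r$. $d_-(g)=\min\{\partial(P):P\mid g\}$ for $g\ne e_{\mathcal{G}}$, and $e_{\mathcal{G}}$ is included in the sum defining $R(n,m)$ (convention $d_-(e_{\mathcal{G}})=\infty$). $\mu$ is the Möbius function on $\mathcal{G}$. *)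

theory Defs
  imports Complex_Main "HOL-Library.Multiset" "HOL-Library.Extended_Nat"
begin

text \<open>An additive arithmetical semigroup is the free commutative monoid on a set of
primes; we model it as finite multisets over a type 'p of primes, with a degree
map on primes extended additively.\<close>

definition gdeg :: "('p \<Rightarrow> nat) \<Rightarrow> 'p multiset \<Rightarrow> nat" where
  "gdeg deg g = (\<Sum>P\<in>#g. deg P)"

definition gnorm :: "('p \<Rightarrow> nat) \<Rightarrow> real \<Rightarrow> 'p multiset \<Rightarrow> real" where
  "gnorm deg q g = q ^ gdeg deg g"

definition gmu :: "'p multiset \<Rightarrow> int" where
  "gmu g = (if \<forall>P. count g P \<le> 1 then (-1) ^ size g else 0)"

definition d_minus :: "('p \<Rightarrow> nat) \<Rightarrow> 'p multiset \<Rightarrow> enat" where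
  "d_minus deg g = (if g = {#} then \<infinity> else enat (Min (deg ` set_mset g)))"

definition arith_semigroup :: "('p \<Rightarrow> nat) \<Rightarrow> bool" where
  "arith_semigroup deg \<longleftrightarrow> (\<forall>P. deg P > 0) \<and> (\<forall>n. finite {g :: 'p multiset. gdeg deg g = n})"

definition axiom_A_sharp :: "('p \<Rightarrow> nat) \<Rightarrow> real \<Rightarrow> real \<Rightarrow> real \<Rightarrow> bool" where
  "axiom_A_sharp deg c q \<eta> \<longleftrightarrow> c > 0 \<and> q > 1 \<and> 0 \<le> \<eta> \<and> \<eta> < 1 \<and>
     (\<exists>C. \<forall>n::nat. \<bar>real (card {g :: 'p multiset. gdeg deg g = n}) - c * q ^ n\<bar> \<le> C * q powr (\<eta> * n))"

definition R_sum :: "('p \<Rightarrow> nat) \<Rightarrow> real \<Rightarrow> nat \<Rightarrow> nat \<Rightarrow> real" where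
  "R_sum deg q n m = (\<Sum>g\<in>{g :: 'p multiset. gdeg deg g \<le> n \<and> d_minus deg g > enat m}.
      real_of_int (gmu g) / gnorm deg q g)"

end

theory Submission
  imports Defs
begin

(* Write G(j) for the number of elements of degree j. For g of degree n, the Moebius sum over
   the divisors h of g all of whose prime factors have degree > m is 0 or 1; summing over g
   gives 0 <= sum_h mu(h) G(n - deg h) <= G(n), the sum running over the h of degree <= n with
   d_-(h) > m. Dividing by q^n and writing G(j)/q^j = c + e(j) with |e(j)| <= C rho^j, where
   rho = q^(eta - 1) < 1, the main term becomes c R(n,m), and the error term is dominated by a
   convergent geometric series, uniformly in n and m. *)

definition num_of_deg :: "('p \<Rightarrow> nat) \<Rightarrow> nat \<Rightarrow> nat" where
  "num_of_deg deg n = card {g :: 'p multiset. gdeg deg g = n}"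

lemma gdeg_add [simp]: "gdeg deg (a + b) = gdeg deg a + gdeg deg b"
  unfolding gdeg_def by simp

lemma enat_less_d_minus_iff: "enat m < d_minus deg g \<longleftrightarrow> (\<forall>P\<in>#g. m < deg P)"
  by (cases "g = {#}") (auto simp: d_minus_def Min_gr_iff)

lemma finite_submultisets: "finite {h. h \<subseteq># g}"
proof -
  have "{h. h \<subseteq># g} \<subseteq> mset ` {xs. set xs \<subseteq> set_mset g \<and> length xs \<le> size g}"
  proof
    fix h assume "h \<in> {h. h \<subseteq># g}"
    then have sub: "h \<subseteq># g" by simp
    obtain xs where xs: "mset xs = h" using ex_mset by blast
    have "set xs \<subseteq> set_mset g" using sub xs by (auto dest: mset_subset_eqD)
    moreover have "length xs \<le> size g" using size_mset_mono[OF sub] xs by (metis size_mset)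
    ultimately show "h \<in> mset ` {xs. set xs \<subseteq> set_mset g \<and> length xs \<le> size g}"
      using xs by blast
  qed
  then show ?thesis by (rule finite_subset) (simp add: finite_lists_length_le)
qed

lemma mset_set_set_mset_eq:
  assumes "\<forall>P. count h P \<le> 1" shows "mset_set (set_mset h) = h"
proof (rule multiset_eqI)
  fix x
  show "count (mset_set (set_mset h)) x = count h x"
  proof (cases "x \<in># h")
    case True
    then have "count h x = 1" using assms[rule_format, of x] count_greater_zero_iff[of h x] by linarith
    with True show ?thesis by (simp add: count_mset_set')
  qed (simp add: count_mset_set' not_in_iff)
qed

lemma gmu_mset_set: "finite X \<Longrightarrow> gmu (mset_set X) = (-1) ^ card X"
  unfolding gmu_def by (simp add: count_mset_set')

lemma sum_gmu_submultisets:
  "(\<Sum>h\<in>{h. h \<subseteq># g \<and> (\<forall>P\<in>#h. r P)}. real_of_int (gmu h))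
     = (if \<forall>P\<in>#g. \<not> r P then 1 else 0)"
proof -
  define D where "D = {h. h \<subseteq># g \<and> (\<forall>P\<in>#h. r P)}"
  define A where "A = {P. P \<in># g \<and> r P}"
  have finD: "finite D" unfolding D_def by (rule finite_subset[OF _ finite_submultisets]) auto
  have finA: "finite A" unfolding A_def by (rule finite_subset[of _ "set_mset g"]) auto
  have squarefree_in_D: "mset_set ` Pow A \<subseteq> D"
  proof
    fix h assume "h \<in> mset_set ` Pow A"
    then obtain X where X: "X \<subseteq> A" "h = mset_set X" by auto
    have "finite X" using X finA finite_subset by blast
    then have "h \<subseteq># g"
      unfolding X(2) by (intro mset_subset_eqI) (use X in \<open>auto simp: count_mset_set' A_def Suc_le_eq\<close>)
    then show "h \<in> D" using X \<open>finite X\<close> by (auto simp: D_def A_def)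
  qed
  have gmu_vanishes: "real_of_int (gmu h) = 0" if "h \<in> D - mset_set ` Pow A" for h
  proof (rule ccontr)
    assume "real_of_int (gmu h) \<noteq> 0"
    then have "\<forall>P. count h P \<le> 1" by (auto simp: gmu_def split: if_splits)
    moreover have "set_mset h \<subseteq> A" using that by (auto simp: D_def A_def dest: mset_subset_eqD)
    ultimately have "h \<in> mset_set ` Pow A"
      using mset_set_set_mset_eq[of h] by (intro image_eqI[of h _ "set_mset h"]) auto
    with that show False by blast
  qed
  have "(\<Sum>h\<in>D. real_of_int (gmu h)) = (\<Sum>h\<in>mset_set ` Pow A. real_of_int (gmu h))"
    using finD squarefree_in_D gmu_vanishes by (intro sum.mono_neutral_right) auto
  also have "\<dots> = (\<Sum>X\<in>Pow A. real_of_int (gmu (mset_set X)))"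
    by (rule sum.reindex[unfolded comp_def], rule inj_onI)
       (metis PowD finA finite_subset finite_set_mset_mset_set)
  also have "\<dots> = (\<Sum>X\<in>Pow A. (-1) ^ card X * (\<Prod>x\<in>X. (1::real)) * (\<Prod>x\<in>A-X. 1))"
    by (rule sum.cong) (auto simp: gmu_mset_set finite_subset[OF _ finA])
  also have "\<dots> = (\<Prod>x\<in>A. (1::real) - 1)"
    by (rule prod_diff_conv_sum[symmetric]) (rule finA)
  also have "\<dots> = (if A = {} then 1 else 0)" using finA by auto
  also have "A = {} \<longleftrightarrow> (\<forall>P\<in>#g. \<not> r P)" by (auto simp: A_def)
  finally show ?thesis by (simp add: D_def)
qed

lemma sum_power_diff_le:
  fixes \<rho> :: real
  assumes "0 < \<rho>" "\<rho> < 1"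
  shows "(\<Sum>j\<le>n. \<rho> ^ (n - j)) \<le> 1 / (1 - \<rho>)"
proof -
  have "(\<Sum>j\<le>n. \<rho> ^ (n - j)) = (\<Sum>j\<le>n. \<rho> ^ j)"
    using sum.atLeastAtMost_rev[of "\<lambda>j. \<rho> ^ j" 0 n] by (simp add: atLeast0AtMost)
  also have "\<dots> < 1 / (1 - \<rho>)" using assms by (intro geometric_sum_less) auto
  finally show ?thesis by simp
qed

lemma axiom_A_sharp_relative_error:
  assumes "axiom_A_sharp deg c q \<eta>"
  obtains C \<rho> where "0 \<le> C" "0 < \<rho>" "\<rho> < 1"
    "\<And>j. \<bar>real (num_of_deg deg j) / q ^ j - c\<bar> \<le> C * \<rho> ^ j"
proof -
  have q: "q > 1" and \<eta>: "0 \<le> \<eta>" "\<eta> < 1" using assms by (auto simp: axiom_A_sharp_def)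
  obtain C where C: "\<And>j::nat. \<bar>real (num_of_deg deg j) - c * q ^ j\<bar> \<le> C * q powr (\<eta> * j)"
    using assms unfolding axiom_A_sharp_def num_of_deg_def by blast
  define \<rho> where "\<rho> = q powr \<eta> / q"
  have "0 \<le> C" using C[of 0] q by (simp add: order_less_imp_not_eq2 order_trans[OF abs_ge_zero])
  moreover have "0 < \<rho>" using q by (simp add: \<rho>_def)
  moreover have "\<rho> < 1"
    using q \<eta> powr_less_mono[of \<eta> 1 q] by (simp add: \<rho>_def)
  moreover have "\<bar>real (num_of_deg deg j) / q ^ j - c\<bar> \<le> C * \<rho> ^ j" for j
  proof -
    have "q powr (\<eta> * j) = (q powr \<eta>) ^ j"
      using q by (simp add: powr_powr [symmetric] powr_realpow mult.commute)
    then have "C * q powr (\<eta> * j) / q ^ j = C * \<rho> ^ j" by (simp add: \<rho>_def power_divide)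
    moreover have "\<bar>real (num_of_deg deg j) / q ^ j - c\<bar> = \<bar>real (num_of_deg deg j) - c * q ^ j\<bar> / q ^ j"
      using q by (simp add: field_simps)
    ultimately show ?thesis using C[of j] q by (metis divide_right_mono zero_le_power less_imp_le
        order_less_trans zero_less_one)
  qed
  ultimately show thesis by (rule that)
qed

lemma R_sum_main_error_decomposition:
  fixes deg :: "'p \<Rightarrow> nat" and n m :: nat
  assumes "q \<noteq> 0"
  defines "S \<equiv> {h. gdeg deg h \<le> n \<and> enat m < d_minus deg h}"
  shows "c * R_sum deg q n m
    = (\<Sum>h\<in>S. real_of_int (gmu h) * real (num_of_deg deg (n - gdeg deg h))) / q ^ n
      - (\<Sum>h\<in>S. real_of_int (gmu h) / q ^ gdeg deg h
          * (real (num_of_deg deg (n - gdeg deg h)) / q ^ (n - gdeg deg h) - c))"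
proof -
  have "real_of_int (gmu h) * real (num_of_deg deg (n - gdeg deg h)) / q ^ n
      = c * (real_of_int (gmu h) / q ^ gdeg deg h) + real_of_int (gmu h) / q ^ gdeg deg h
          * (real (num_of_deg deg (n - gdeg deg h)) / q ^ (n - gdeg deg h) - c)"
    if "h \<in> S" for h
  proof -
    have "q ^ n = q ^ gdeg deg h * q ^ (n - gdeg deg h)"
      using that by (simp add: S_def flip: power_add)
    then show ?thesis using assms(1) by (simp add: field_simps)
  qed
  then have "(\<Sum>h\<in>S. real_of_int (gmu h) * real (num_of_deg deg (n - gdeg deg h))) / q ^ n
      = c * R_sum deg q n m + (\<Sum>h\<in>S. real_of_int (gmu h) / q ^ gdeg deg h
          * (real (num_of_deg deg (n - gdeg deg h)) / q ^ (n - gdeg deg h) - c))"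
    by (simp add: sum_divide_distrib sum.distrib sum_distrib_left R_sum_def gnorm_def S_def)
  then show ?thesis by simp
qed

context
  fixes deg :: "'p \<Rightarrow> nat"
  assumes finite_fibres: "\<And>n. finite {g :: 'p multiset. gdeg deg g = n}"
begin

lemma finite_gdeg_le: "finite {g :: 'p multiset. gdeg deg g \<le> n}"
proof -
  have "{g :: 'p multiset. gdeg deg g \<le> n} = (\<Union>j\<le>n. {g. gdeg deg g = j})" by auto
  then show ?thesis using finite_fibres by simp
qed

lemma sum_gdeg_le_by_degree:
  "(\<Sum>h\<in>{h :: 'p multiset. gdeg deg h \<le> n}. \<phi> (gdeg deg h))
     = (\<Sum>j\<le>n. real (num_of_deg deg j) * \<phi> j)"
proof -
  have "(\<Sum>h\<in>{h :: 'p multiset. gdeg deg h \<le> n}. \<phi> (gdeg deg h))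
      = (\<Sum>j\<le>n. \<Sum>h\<in>{h \<in> {h. gdeg deg h \<le> n}. gdeg deg h = j}. \<phi> (gdeg deg h))"
    by (rule sum.group[symmetric]) (auto simp: finite_gdeg_le)
  also have "\<dots> = (\<Sum>j\<le>n. \<Sum>h\<in>{h. gdeg deg h = j}. \<phi> j)"
    by (intro sum.cong) auto
  finally show ?thesis by (simp add: num_of_deg_def)
qed

lemma sum_submultisets_of_degree_swap:
  "(\<Sum>g\<in>{g :: 'p multiset. gdeg deg g = n}. \<Sum>h\<in>{h. h \<subseteq># g \<and> r h}. f h)
     = (\<Sum>h\<in>{h. gdeg deg h \<le> n \<and> r h}. f h * real (num_of_deg deg (n - gdeg deg h)))"
proof -
  define T where "T j = {g :: 'p multiset. gdeg deg g = j}" for j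
  define D where "D g = {h. h \<subseteq># g \<and> r h}" for g :: "'p multiset"
  define S where "S = {h. gdeg deg h \<le> n \<and> r h}"
  have finS: "finite S" unfolding S_def by (rule finite_subset[OF _ finite_gdeg_le]) auto
  have "(\<Sum>g\<in>T n. \<Sum>h\<in>D g. f h) = (\<Sum>(g,h)\<in>Sigma (T n) D. f h)"
    by (rule sum.Sigma) (auto simp: T_def D_def finite_fibres finite_submultisets)
  also have "\<dots> = (\<Sum>(h,k)\<in>Sigma S (\<lambda>h. T (n - gdeg deg h)). f h)"
  proof (rule sum.reindex_bij_witness[where i = "\<lambda>(h,k). (h + k, h)" and j = "\<lambda>(g,h). (h, g - h)"])
    fix a assume "a \<in> Sigma (T n) D"
    then obtain g h where a: "a = (g,h)" "gdeg deg g = n" "h \<subseteq># g" "r h"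
      by (auto simp: T_def D_def)
    have e: "h + (g - h) = g" using a(3) by (simp add: subset_mset.add_diff_inverse)
    then have "gdeg deg g = gdeg deg h + gdeg deg (g - h)" by (metis gdeg_add)
    with a e show "(case case a of (g, h) \<Rightarrow> (h, g - h) of (h, k) \<Rightarrow> (h + k, h)) = a"
      and "(case a of (g, h) \<Rightarrow> (h, g - h)) \<in> Sigma S (\<lambda>h. T (n - gdeg deg h))"
      and "(case case a of (g, h) \<Rightarrow> (h, g - h) of (h, k) \<Rightarrow> f h) = (case a of (g, h) \<Rightarrow> f h)"
      by (auto simp: S_def T_def)
  next
    fix b assume "b \<in> Sigma S (\<lambda>h. T (n - gdeg deg h))"
    then show "(case case b of (h, k) \<Rightarrow> (h + k, h) of (g, h) \<Rightarrow> (h, g - h)) = b"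
      and "(case b of (h, k) \<Rightarrow> (h + k, h)) \<in> Sigma (T n) D"
      by (auto simp: S_def T_def D_def)
  qed
  also have "\<dots> = (\<Sum>h\<in>S. \<Sum>k\<in>T (n - gdeg deg h). f h)"
    by (rule sum.Sigma[symmetric]) (auto simp: T_def finite_fibres finS)
  finally show ?thesis by (simp add: T_def D_def S_def num_of_deg_def mult.commute)
qed

lemma abs_sum_gmu_num_of_deg_le:
  "\<bar>\<Sum>h\<in>{h. gdeg deg h \<le> n \<and> enat m < d_minus deg h}.
      real_of_int (gmu h) * real (num_of_deg deg (n - gdeg deg h))\<bar> \<le> real (num_of_deg deg n)"
proof -
  let ?inner = "\<lambda>g :: 'p multiset. \<Sum>h\<in>{h. h \<subseteq># g \<and> enat m < d_minus deg h}. real_of_int (gmu h)"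
  have inner_le: "\<bar>?inner g\<bar> \<le> 1" for g
    using sum_gmu_submultisets[of g "\<lambda>P. m < deg P"] by (simp add: enat_less_d_minus_iff)
  have "\<bar>\<Sum>g\<in>{g. gdeg deg g = n}. ?inner g\<bar> \<le> (\<Sum>g\<in>{g. gdeg deg g = n}. \<bar>?inner g\<bar>)"
    by (rule sum_abs)
  also have "\<dots> \<le> (\<Sum>g\<in>{g :: 'p multiset. gdeg deg g = n}. 1)"
    by (intro sum_mono inner_le)
  finally show ?thesis
    by (simp add: sum_submultisets_of_degree_swap num_of_deg_def)
qed

lemma abs_sum_weighted_error_le:
  fixes f :: "'p multiset \<Rightarrow> real" and e :: "nat \<Rightarrow> real"
  assumes q: "q > 1" and C: "0 \<le> C" and \<rho>: "0 < \<rho>" "\<rho> < 1"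
    and count_le: "\<And>j. real (num_of_deg deg j) \<le> B * q ^ j"
    and S: "S \<subseteq> {h. gdeg deg h \<le> n}"
    and f: "\<And>h. h \<in> S \<Longrightarrow> \<bar>f h\<bar> \<le> 1 / q ^ gdeg deg h"
    and e: "\<And>j. \<bar>e j\<bar> \<le> C * \<rho> ^ j"
  shows "\<bar>\<Sum>h\<in>S. f h * e (n - gdeg deg h)\<bar> \<le> B * C / (1 - \<rho>)"
proof -
  define \<phi> where "\<phi> j = C * \<rho> ^ (n - j) / q ^ j" for j
  have \<phi>_nonneg: "0 \<le> \<phi> j" for j using C \<rho> q by (simp add: \<phi>_def)
  have B: "0 \<le> B" using count_le[of 0] of_nat_0_le_iff[of "num_of_deg deg 0"] by simp
  have "\<bar>\<Sum>h\<in>S. f h * e (n - gdeg deg h)\<bar> \<le> (\<Sum>h\<in>S. \<bar>f h\<bar> * \<bar>e (n - gdeg deg h)\<bar>)"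
    by (simp add: abs_mult order_trans[OF sum_abs])
  also have "\<dots> \<le> (\<Sum>h\<in>S. \<phi> (gdeg deg h))"
  proof (rule sum_mono)
    fix h assume "h \<in> S"
    then have "\<bar>f h\<bar> * \<bar>e (n - gdeg deg h)\<bar> \<le> (1 / q ^ gdeg deg h) * (C * \<rho> ^ (n - gdeg deg h))"
      using f e q by (intro mult_mono) auto
    then show "\<bar>f h\<bar> * \<bar>e (n - gdeg deg h)\<bar> \<le> \<phi> (gdeg deg h)" by (simp add: \<phi>_def)
  qed
  also have "\<dots> \<le> (\<Sum>h\<in>{h. gdeg deg h \<le> n}. \<phi> (gdeg deg h))"
    using S \<phi>_nonneg by (intro sum_mono2 finite_gdeg_le) auto
  also have "\<dots> = (\<Sum>j\<le>n. real (num_of_deg deg j) * \<phi> j)"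
    by (rule sum_gdeg_le_by_degree)
  also have "\<dots> \<le> (\<Sum>j\<le>n. B * C * \<rho> ^ (n - j))"
  proof (rule sum_mono)
    fix j
    have "real (num_of_deg deg j) * \<phi> j \<le> (B * q ^ j) * \<phi> j"
      using count_le \<phi>_nonneg by (rule mult_right_mono)
    then show "real (num_of_deg deg j) * \<phi> j \<le> B * C * \<rho> ^ (n - j)"
      using q by (simp add: \<phi>_def)
  qed
  also have "\<dots> = B * C * (\<Sum>j\<le>n. \<rho> ^ (n - j))" by (simp add: sum_distrib_left)
  also have "\<dots> \<le> B * C * (1 / (1 - \<rho>))"
    using B C \<rho> by (intro mult_left_mono sum_power_diff_le) auto
  finally show ?thesis by simp
qed

lemma abs_R_sum_le:
  assumes q: "q > 1" and c: "c > 0" and C: "0 \<le> C" and \<rho>: "0 < \<rho>" "\<rho> < 1"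
    and err: "\<And>j. \<bar>real (num_of_deg deg j) / q ^ j - c\<bar> \<le> C * \<rho> ^ j"
  shows "\<bar>R_sum deg q n m\<bar> \<le> (c + C) * (1 + C / (1 - \<rho>)) / c"
proof -
  let ?S = "{h. gdeg deg h \<le> n \<and> enat m < d_minus deg h}"
  let ?main = "(\<Sum>h\<in>?S. real_of_int (gmu h) * real (num_of_deg deg (n - gdeg deg h))) / q ^ n"
  let ?error = "\<Sum>h\<in>?S. real_of_int (gmu h) / q ^ gdeg deg h
      * (real (num_of_deg deg (n - gdeg deg h)) / q ^ (n - gdeg deg h) - c)"
  have count_le: "real (num_of_deg deg j) \<le> (c + C) * q ^ j" for j
  proof -
    have "C * \<rho> ^ j \<le> C" using C \<rho> by (simp add: mult_left_le power_le_one)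
    then have "real (num_of_deg deg j) / q ^ j \<le> c + C" using err[of j] by linarith
    then show ?thesis using q by (simp add: divide_le_eq)
  qed
  have "\<bar>?main\<bar> \<le> real (num_of_deg deg n) / q ^ n"
    using abs_sum_gmu_num_of_deg_le[of n m] q by (simp add: abs_divide divide_right_mono)
  also have "\<dots> \<le> c + C" using count_le[of n] q by (simp add: divide_le_eq)
  finally have main: "\<bar>?main\<bar> \<le> c + C" .
  have error: "\<bar>?error\<bar> \<le> (c + C) * C / (1 - \<rho>)"
  proof (rule abs_sum_weighted_error_le[OF q C \<rho> count_le])
    show "\<bar>real_of_int (gmu h) / q ^ gdeg deg h\<bar> \<le> 1 / q ^ gdeg deg h" for h
      using q by (auto simp: gmu_def abs_divide)
  qed (auto simp: err)
  have "c * R_sum deg q n m = ?main - ?error"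
    by (rule R_sum_main_error_decomposition) (use q in simp)
  then have "c * \<bar>R_sum deg q n m\<bar> = \<bar>?main - ?error\<bar>"
    using c by (metis abs_mult abs_of_pos)
  also have "\<dots> \<le> \<bar>?main\<bar> + \<bar>?error\<bar>" by (rule abs_triangle_ineq4)
  also have "\<dots> \<le> (c + C) + (c + C) * C / (1 - \<rho>)" using main error by (rule add_mono)
  finally show ?thesis using c by (simp add: pos_le_divide_eq algebra_simps)
qed

end

theorem lemma2p7:
  fixes deg :: "'p \<Rightarrow> nat" and c q \<eta> :: real
  assumes "arith_semigroup deg"
    and "axiom_A_sharp deg c q \<eta>"
  shows "\<exists>B. \<forall>n m. \<bar>R_sum deg q n m\<bar> \<le> B"
proof -
  have finite_fibres: "\<And>n. finite {g :: 'p multiset. gdeg deg g = n}"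
    using assms(1) by (simp add: arith_semigroup_def)
  have "q > 1" "c > 0" using assms(2) by (auto simp: axiom_A_sharp_def)
  moreover obtain C \<rho> where "0 \<le> C" "0 < \<rho>" "\<rho> < 1"
    "\<And>j. \<bar>real (num_of_deg deg j) / q ^ j - c\<bar> \<le> C * \<rho> ^ j"
    using axiom_A_sharp_relative_error[OF assms(2)] by blast
  ultimately show ?thesis using abs_R_sum_le[OF finite_fibres] by blast
qed

end
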